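(* Suppose both $\nu$ and $\nu'$ are supported on a common set of $\ell$ atoms in $[-1,1]$, and each of these atoms is at distance at least $\gamma$ from all but at most $\ell'$ other atoms of this set. Let $\delta=\max_{i\in[\ell-1]}|m_i(\nu)-m_i(\nu')|$. Then \[W_1(\nu,\nu')\le\ell\Big(\frac{\ell4^{\ell-1}\delta}{\gamma^{\ell-\ell'-1}}\Big)^{\frac{1}{\ell'}}.\]
   Context: $m_i(\pi)=\mathbb{E}_\pi X^i$; $[\ell-1]=\{1,\dots,\ell-1\}$; $W_1$ is the 1-Wasserstein distance on $\mathbb{R}$. *)

theory Defs
  imports "HOL-Probability.Probability"
begin

definition moment :: "real pmf \<Rightarrow> nat \<Rightarrow> real" where
  "moment \<nu> i = measure_pmf.expectation \<nu> (\<lambda>x. x ^ i)"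

text \<open>1-Wasserstein distance: infimum over couplings of the expected distance.
  For finitely supported measures every coupling is discrete, so couplings are pmfs.\<close>
definition W1 :: "real pmf \<Rightarrow> real pmf \<Rightarrow> real" where
  "W1 \<nu> \<nu>' = Inf {measure_pmf.expectation \<pi> (\<lambda>(x, y). \<bar>x - y\<bar>) | \<pi>.
                    map_pmf fst \<pi> = \<nu> \<and> map_pmf snd \<pi> = \<nu>'}"

end

theory Submission
  imports Defs "HOL-Computational_Algebra.Polynomial"
begin

text \<open>
  On the line \<open>W\<^sub>1(\<nu>, \<nu>') \<le> \<integral>|F - F'|\<close>, which for measures on the atoms is the sum, over the
  gaps \<open>a < b\<close> between consecutive atoms, of \<open>|F(a) - F'(a)| (b - a)\<close>. For such a gap let \<open>f\<close>
  be the indicator of \<open>(-\<infinity>, a]\<close>, so that \<open>F(a) - F'(a) = \<Sum>\<^sub>x f(x) (\<nu> - \<nu>')(x)\<close>. Replacing \<open>f\<close>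
  by its interpolating polynomial on the atoms, in Newton form, expresses this through the
  moment differences; each Newton term is weighted by a divided difference of \<open>f\<close> and by the
  coefficient sum (at most \<open>2^n\<close>) of its basis polynomial. By Neville's recurrence a divided
  difference of \<open>f\<close> on \<open>n + 1\<close> nodes is at most \<open>2^n\<close> divided by the spans of the node sets
  met along the way. These span at least \<open>b - a\<close>, as \<open>f\<close> is constant on sets not straddling
  the gap, and at least \<open>\<gamma>\<close> once they have more than \<open>l' + 1\<close> nodes. Hence
  \<open>|F(a) - F'(a)| (b - a)^l' \<le> l 4^(l-1) \<delta> / \<gamma>^(l-l'-1) =: X\<close>, and since also
  \<open>|F(a) - F'(a)| \<le> 1\<close>, each of the at most \<open>l - 1\<close> gaps contributes at most \<open>X^(1/l')\<close>.
\<close>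

section \<open>Polynomial interpolation\<close>

definition node_poly :: "'a::idom set \<Rightarrow> 'a poly" where
  "node_poly S = (\<Prod>y\<in>S. [:-y, 1:])"

lemma degree_node_poly: "finite S \<Longrightarrow> degree (node_poly S) = card S"
  unfolding node_poly_def by (subst degree_prod_eq_sum_degree) auto

lemma lead_coeff_node_poly: "finite S \<Longrightarrow> coeff (node_poly S) (card S) = 1"
  using lead_coeff_prod[of "\<lambda>y. [:-y, 1:]" S] degree_node_poly[of S] unfolding node_poly_def by simp

lemma poly_node_poly_eq_0: "finite S \<Longrightarrow> y \<in> S \<Longrightarrow> poly (node_poly S) y = 0"
  unfolding node_poly_def by (auto simp: poly_prod)

lemma poly_node_poly_neq_0: "finite S \<Longrightarrow> x \<notin> S \<Longrightarrow> poly (node_poly S) x \<noteq> 0"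
  unfolding node_poly_def by (auto simp: poly_prod)

definition interp :: "('a::field \<Rightarrow> 'a) \<Rightarrow> 'a set \<Rightarrow> 'a poly" where
  "interp f S = (THE P. degree P < card S \<and> (\<forall>x\<in>S. poly P x = f x))"

lemma interp_exists:
  fixes S :: "'a::field set"
  assumes "finite S" "S \<noteq> {}"
  shows "\<exists>P. degree P < card S \<and> (\<forall>x\<in>S. poly P x = f x)"
  using assms
proof (induction S rule: finite_ne_induct)
  case (singleton x)
  show ?case by (intro exI[of _ "[:f x:]"]) auto
next
  case (insert x S)
  then obtain P where P: "degree P < card S" "\<forall>y\<in>S. poly P y = f y" by blast
  define Q where "Q = P + smult ((f x - poly P x) / poly (node_poly S) x) (node_poly S)"
  have "degree Q \<le> max (degree P) (degree (node_poly S))"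
    unfolding Q_def by (meson degree_add_le degree_smult_le le_trans max.cobounded1 max.cobounded2)
  then have "degree Q < card (insert x S)"
    using P insert degree_node_poly[of S] by auto
  moreover have "\<forall>y\<in>insert x S. poly Q y = f y"
    using P insert poly_node_poly_eq_0[of S] poly_node_poly_neq_0[of S x] by (auto simp: Q_def)
  ultimately show ?case by blast
qed

lemma interp_unique:
  "finite S \<Longrightarrow> degree P < card S \<Longrightarrow> \<forall>x\<in>S. poly P x = f x \<Longrightarrow> interp f S = P"
  unfolding interp_def by (rule the_equality) (auto intro: poly_eqI_degree[of S])

lemma
  assumes "finite S" "S \<noteq> {}"
  shows degree_interp: "degree (interp f S) < card S"
    and poly_interp: "x \<in> S \<Longrightarrow> poly (interp f S) x = f x"
  using interp_exists[OF assms, of f] interp_unique[OF assms(1), of _ f] by metis+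

lemma interp_singleton: "interp f {x} = [:f x:]"
  by (rule interp_unique) auto

lemma interp_const:
  "finite S \<Longrightarrow> S \<noteq> {} \<Longrightarrow> \<forall>x\<in>S. f x = c \<Longrightarrow> interp f S = [:c:]"
  by (rule interp_unique) (auto simp: card_gt_0_iff)

definition divided_diff :: "('a::field \<Rightarrow> 'a) \<Rightarrow> 'a set \<Rightarrow> 'a" where
  "divided_diff f S = coeff (interp f S) (card S - 1)"

lemma divided_diff_singleton: "divided_diff f {x} = f x"
  by (simp add: divided_diff_def interp_singleton)

lemma divided_diff_const:
  assumes "finite S" "card S \<ge> 2" "\<forall>x\<in>S. f x = c"
  shows "divided_diff f S = 0"
proof -
  have "interp f S = [:c:]" using assms by (intro interp_const) auto
  then show ?thesis using assms(2) by (simp add: divided_diff_def coeff_pCons split: nat.split)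
qed

lemma coeff_linear_mult_Suc:
  fixes P :: "'a::comm_ring_1 poly"
  shows "coeff ([:c, 1:] * P) (Suc m) = c * coeff P (Suc m) + coeff P m"
  by (simp add: mult_pCons_left one_pCons[symmetric] del: one_pCons)

lemma divided_diff_remove:
  fixes S :: "'a::field set"
  assumes S: "finite S" "u \<in> S" "v \<in> S" "u \<noteq> v"
  shows "divided_diff f S = (divided_diff f (S - {u}) - divided_diff f (S - {v})) / (v - u)"
proof -
  define n where "n = card S"
  have n2: "n \<ge> 2"
    using card_mono[of S "{u, v}"] S by (auto simp: n_def)
  have card_rem: "card (S - {u}) = n - 1" "card (S - {v}) = n - 1"
    using S by (auto simp: n_def)
  have ne: "S - {u} \<noteq> {}" "S - {v} \<noteq> {}" using S by auto
  define P1 where "P1 = interp f (S - {u})"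
  define P2 where "P2 = interp f (S - {v})"
  have P1: "degree P1 < n - 1" "\<forall>x\<in>S - {u}. poly P1 x = f x"
    using degree_interp[of "S - {u}" f] poly_interp[where S="S - {u}" and f=f] S ne card_rem
    unfolding P1_def by auto
  have P2: "degree P2 < n - 1" "\<forall>x\<in>S - {v}. poly P2 x = f x"
    using degree_interp[of "S - {v}" f] poly_interp[where S="S - {v}" and f=f] S ne card_rem
    unfolding P2_def by auto
  define N where "N = smult (1 / (v - u)) ([:-u, 1:] * P1 - [:-v, 1:] * P2)"
  have "degree ([:-u, 1:] * P1) \<le> n - 1" "degree ([:-v, 1:] * P2) \<le> n - 1"
    using degree_mult_le[of "[:-u, 1:]" P1] degree_mult_le[of "[:-v, 1:]" P2] P1 P2 n2 by auto
  then have "degree N \<le> n - 1"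
    unfolding N_def using degree_smult_le degree_diff_le le_trans by blast
  then have "degree N < card S" using n2 by (simp add: n_def)
  moreover have "\<forall>x\<in>S. poly N x = f x"
  proof
    fix x assume "x \<in> S"
    then consider "x = u" | "x = v" | "x \<in> S - {u}" "x \<in> S - {v}" by blast
    then show "poly N x = f x"
      using P1(2) P2(2) S by cases (auto simp: N_def field_simps)
  qed
  ultimately have "interp f S = N" by (rule interp_unique[OF S(1)])
  have n_Suc: "n - 1 = Suc (n - 2)" using n2 by simp
  have "coeff P1 (Suc (n - 2)) = 0" "coeff P2 (Suc (n - 2)) = 0"
    using P1(1) P2(1) n_Suc by (auto intro: coeff_eq_0)
  then have "coeff N (n - 1) = (coeff P1 (n - 2) - coeff P2 (n - 2)) / (v - u)"
    unfolding N_def coeff_smult coeff_diff n_Suc coeff_linear_mult_Suc by simp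
  then have "divided_diff f S = (coeff P1 (n - 2) - coeff P2 (n - 2)) / (v - u)"
    using \<open>interp f S = N\<close> by (simp add: divided_diff_def n_def)
  also have "\<dots> = (divided_diff f (S - {u}) - divided_diff f (S - {v})) / (v - u)"
    by (simp add: divided_diff_def P1_def P2_def card_rem numeral_2_eq_2 diff_diff_left)
  finally show ?thesis .
qed

lemma interp_remove:
  fixes S :: "'a::field set"
  assumes S: "finite S" "x \<in> S" "card S \<ge> 2"
  shows "interp f S = interp f (S - {x}) + smult (divided_diff f S) (node_poly (S - {x}))"
proof -
  define n where "n = card S"
  have card_rem: "card (S - {x}) = n - 1" using S by (auto simp: n_def)
  have deg: "degree (interp f S) < n" using degree_interp[of S f] S by (auto simp: n_def)
  define R where "R = interp f S - smult (divided_diff f S) (node_poly (S - {x}))"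
  have deg_node: "degree (node_poly (S - {x})) = n - 1" "coeff (node_poly (S - {x})) (n - 1) = 1"
    using degree_node_poly[of "S - {x}"] lead_coeff_node_poly[of "S - {x}"] S card_rem by auto
  have "degree R \<le> n - 2"
  proof (rule degree_le, intro allI impI)
    fix i assume i: "n - 2 < i"
    show "coeff R i = 0"
    proof (cases "i = n - 1")
      case True
      then show ?thesis using deg_node by (simp add: R_def divided_diff_def n_def)
    next
      case False
      then show ?thesis using i deg deg_node by (simp add: R_def coeff_eq_0)
    qed
  qed
  then have "degree R < card (S - {x})" using card_rem S by (simp add: n_def)
  moreover have "\<forall>y\<in>S - {x}. poly R y = f y"
    using poly_interp[where S=S and f=f] poly_node_poly_eq_0[of "S - {x}"] S unfolding R_def by auto
  ultimately have "interp f (S - {x}) = R" using interp_unique S by blast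
  then show ?thesis unfolding R_def by simp
qed

section \<open>Coefficient norms and moments\<close>

definition coeff_l1 :: "'a::linordered_idom poly \<Rightarrow> 'a" where
  "coeff_l1 P = (\<Sum>i\<le>degree P. \<bar>coeff P i\<bar>)"

lemma coeff_l1_eq_sum: "degree P \<le> n \<Longrightarrow> coeff_l1 P = (\<Sum>i\<le>n. \<bar>coeff P i\<bar>)"
  unfolding coeff_l1_def by (rule sum.mono_neutral_left) (auto simp: coeff_eq_0)

lemma coeff_l1_nonneg: "coeff_l1 P \<ge> 0"
  by (simp add: coeff_l1_def sum_nonneg)

lemma coeff_l1_add: "coeff_l1 (P + Q) \<le> coeff_l1 P + coeff_l1 Q"
proof -
  define n where "n = max (degree P) (degree Q)"
  have "coeff_l1 (P + Q) = (\<Sum>i\<le>n. \<bar>coeff (P + Q) i\<bar>)"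
    by (rule coeff_l1_eq_sum) (simp add: n_def degree_add_le)
  also have "\<dots> \<le> (\<Sum>i\<le>n. \<bar>coeff P i\<bar> + \<bar>coeff Q i\<bar>)"
    by (intro sum_mono) (simp add: abs_triangle_ineq)
  also have "\<dots> = coeff_l1 P + coeff_l1 Q"
    by (simp add: sum.distrib coeff_l1_eq_sum[of P n] coeff_l1_eq_sum[of Q n] n_def)
  finally show ?thesis .
qed

lemma coeff_l1_smult: "coeff_l1 (smult c P) = \<bar>c\<bar> * coeff_l1 P"
  by (simp add: coeff_l1_eq_sum[OF degree_smult_le] coeff_l1_def abs_mult sum_distrib_left)

lemma coeff_l1_pCons_0: "coeff_l1 (pCons 0 P) = coeff_l1 P"
proof -
  have "coeff_l1 (pCons 0 P) = (\<Sum>i\<le>Suc (degree P). \<bar>coeff (pCons 0 P) i\<bar>)"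
    by (rule coeff_l1_eq_sum[OF degree_pCons_le])
  also have "\<dots> = coeff_l1 P"
    by (subst sum.atMost_Suc_shift) (simp add: coeff_l1_def)
  finally show ?thesis .
qed

lemma coeff_l1_linear_mult: "coeff_l1 ([:-y, 1:] * P) \<le> (1 + \<bar>y\<bar>) * coeff_l1 P"
proof -
  have "[:-y, 1:] * P = smult (-y) P + pCons 0 P"
    by (simp add: mult_pCons_left one_pCons[symmetric] del: one_pCons)
  then have "coeff_l1 ([:-y, 1:] * P) \<le> coeff_l1 (smult (-y) P) + coeff_l1 (pCons 0 P)"
    by (metis coeff_l1_add)
  also have "\<dots> = \<bar>y\<bar> * coeff_l1 P + coeff_l1 P"
    by (simp only: coeff_l1_smult coeff_l1_pCons_0 abs_minus_cancel)
  finally show ?thesis by (simp add: algebra_simps)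
qed

lemma coeff_l1_node_poly:
  "finite T \<Longrightarrow> T \<subseteq> {-1..1} \<Longrightarrow> coeff_l1 (node_poly T) \<le> 2 ^ card T"
proof (induction T rule: finite_induct)
  case empty
  then show ?case by (simp add: node_poly_def coeff_l1_def)
next
  case (insert y T)
  have "coeff_l1 (node_poly (insert y T)) \<le> (1 + \<bar>y\<bar>) * coeff_l1 (node_poly T)"
    using insert coeff_l1_linear_mult by (simp add: node_poly_def)
  also have "\<dots> \<le> 2 * 2 ^ card T"
    using insert by (intro mult_mono) (auto simp: coeff_l1_nonneg)
  finally show ?case using insert by simp
qed

definition pairing :: "('a::comm_ring_1 \<Rightarrow> 'a) \<Rightarrow> 'a set \<Rightarrow> 'a poly \<Rightarrow> 'a" where
  "pairing D A P = (\<Sum>x\<in>A. poly P x * D x)"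

lemma pairing_add: "pairing D A (P + Q) = pairing D A P + pairing D A Q"
  by (simp add: pairing_def algebra_simps sum.distrib)

lemma pairing_smult: "pairing D A (smult c P) = c * pairing D A P"
  by (simp add: pairing_def sum_distrib_left algebra_simps)

lemma pairing_eq_moments:
  "pairing D A P = (\<Sum>i\<le>degree P. coeff P i * (\<Sum>x\<in>A. x ^ i * D x))"
proof -
  have "pairing D A P = (\<Sum>x\<in>A. \<Sum>i\<le>degree P. coeff P i * (x ^ i * D x))"
    unfolding pairing_def poly_altdef by (simp add: sum_distrib_right mult.assoc)
  also have "\<dots> = (\<Sum>i\<le>degree P. coeff P i * (\<Sum>x\<in>A. x ^ i * D x))"
    by (subst sum.swap) (simp add: sum_distrib_left)
  finally show ?thesis .
qed

lemma abs_pairing_le: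
  fixes D :: "'a::linordered_idom \<Rightarrow> 'a"
  assumes "sum D A = 0" and "\<forall>i\<in>{1..N}. \<bar>\<Sum>x\<in>A. x ^ i * D x\<bar> \<le> \<delta>" and "\<delta> \<ge> 0"
    and "degree P \<le> N"
  shows "\<bar>pairing D A P\<bar> \<le> \<delta> * coeff_l1 P"
proof -
  have "\<bar>pairing D A P\<bar> \<le> (\<Sum>i\<le>degree P. \<bar>coeff P i\<bar> * \<bar>\<Sum>x\<in>A. x ^ i * D x\<bar>)"
    unfolding pairing_eq_moments abs_mult[symmetric] by (rule sum_abs)
  also have "\<dots> \<le> (\<Sum>i\<le>degree P. \<bar>coeff P i\<bar> * \<delta>)"
  proof (intro sum_mono mult_left_mono)
    fix i assume "i \<in> {..degree P}"
    then show "\<bar>\<Sum>x\<in>A. x ^ i * D x\<bar> \<le> \<delta>"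
      using assms by (cases "i = 0") auto
  qed simp
  also have "\<dots> = \<delta> * coeff_l1 P"
    by (simp add: coeff_l1_def sum_distrib_left mult.commute)
  finally show ?thesis .
qed

section \<open>Divided differences of a step function\<close>

definition sparse_atoms :: "real set \<Rightarrow> real \<Rightarrow> nat \<Rightarrow> bool" where
  "sparse_atoms A \<gamma> k \<longleftrightarrow> (\<forall>a\<in>A. card {b\<in>A. b \<noteq> a \<and> \<bar>a - b\<bar> < \<gamma>} \<le> k)"

definition adjacent :: "real set \<Rightarrow> real \<Rightarrow> real \<Rightarrow> bool" where
  "adjacent A a b \<longleftrightarrow> a \<in> A \<and> b \<in> A \<and> a < b \<and> (\<forall>c\<in>A. \<not> (a < c \<and> c < b))"

lemma sparse_atoms_spread:
  assumes "finite A" "sparse_atoms A \<gamma> k" "S \<subseteq> A" "card S \<ge> k + 2"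
  shows "\<gamma> \<le> Max S - Min S"
proof -
  have fin: "finite S" using assms finite_subset by blast
  have "S \<noteq> {}" using assms by auto
  then have min: "Min S \<in> S" using fin by simp
  have "\<not> S - {Min S} \<subseteq> {y\<in>A. y \<noteq> Min S \<and> \<bar>Min S - y\<bar> < \<gamma>}"
  proof
    assume "S - {Min S} \<subseteq> {y\<in>A. y \<noteq> Min S \<and> \<bar>Min S - y\<bar> < \<gamma>}"
    then have "card (S - {Min S}) \<le> card {y\<in>A. y \<noteq> Min S \<and> \<bar>Min S - y\<bar> < \<gamma>}"
      using assms(1) by (intro card_mono) auto
    also have "\<dots> \<le> k" using assms min unfolding sparse_atoms_def by auto
    finally show False using assms min fin by simp
  qed
  then obtain y where "y \<in> S - {Min S}" "y \<notin> {y\<in>A. y \<noteq> Min S \<and> \<bar>Min S - y\<bar> < \<gamma>}"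
    by blast
  then have y: "y \<in> S" "\<gamma> \<le> \<bar>Min S - y\<bar>" using assms by auto
  then show ?thesis using fin Min_le[OF fin y(1)] Max_ge[OF fin y(1)] by linarith
qed

lemma sparse_atoms_gamma_le_2:
  assumes "finite A" "A \<subseteq> {-1..1}" "sparse_atoms A \<gamma> k" "card A \<ge> k + 2"
  shows "\<gamma> \<le> 2"
proof -
  have "A \<noteq> {}" using assms by auto
  then have "Max A \<le> 1" "Min A \<ge> -1" using assms Max_in Min_in by fastforce+
  then show ?thesis using sparse_atoms_spread[OF assms(1,3) order.refl assms(4)] by linarith
qed

locale adjacent_atoms =
  fixes A :: "real set" and a b \<gamma> :: real and k :: nat
  assumes finite_atoms: "finite A" and atoms_bounded: "A \<subseteq> {-1..1}"
    and adjacent: "adjacent A a b" and gamma_pos: "\<gamma> > 0" and sparse: "sparse_atoms A \<gamma> k"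
    and k_le: "k \<le> card A - 1"
begin

lemma a_in: "a \<in> A" and b_in: "b \<in> A" and a_less_b: "a < b"
    and nothing_between: "c \<in> A \<Longrightarrow> \<not> (a < c \<and> c < b)"
  using adjacent by (auto simp: adjacent_def)

lemma gap_le_2: "b - a \<le> 2"
proof -
  have "a \<in> {-1..1}" "b \<in> {-1..1}" using a_in b_in atoms_bounded by auto
  then show ?thesis by simp
qed

definition step :: "real \<Rightarrow> real" where
  "step x = (if x \<le> a then 1 else 0)"

text \<open>\<open>1 / scale m\<close> bounds from below the product of the spans met by Neville's recurrence
  on \<open>m + 1\<close> nodes.\<close>
definition scale :: "nat \<Rightarrow> real" where
  "scale m = 1 / ((b - a) ^ min m k * \<gamma> ^ (m - k))"

lemma scale_nonneg: "scale m \<ge> 0"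
  using a_less_b gamma_pos by (simp add: scale_def)

lemma scale_Suc: "scale (Suc m) = scale m / (if m < k then b - a else \<gamma>)"
proof (cases "m < k")
  case True
  then have "min (Suc m) k = Suc m" "min m k = m" "Suc m - k = 0" "m - k = 0" by auto
  then show ?thesis using True by (simp add: scale_def)
next
  case False
  then have "min (Suc m) k = k" "min m k = k" "Suc m - k = Suc (m - k)" by auto
  then show ?thesis using False by (simp add: scale_def)
qed

lemma divided_diff_step_bound:
  "S \<subseteq> A \<Longrightarrow> S \<noteq> {} \<Longrightarrow> \<bar>divided_diff step S\<bar> \<le> 2 ^ (card S - 1) * scale (card S - 1)"
proof (induction "card S" arbitrary: S rule: less_induct)
  case less
  have fin: "finite S" using less finite_atoms finite_subset by blast
  then have "card S \<ge> 1" using less by (simp add: Suc_le_eq card_gt_0_iff)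
  then consider "card S = 1" | "card S \<ge> 2" "Max S \<le> a" | "card S \<ge> 2" "a < Min S"
    | "card S \<ge> 2" "Min S \<le> a" "a < Max S"
    by linarith
  then show ?case
  proof cases
    case 1
    then obtain x where "S = {x}" by (auto simp: card_Suc_eq)
    then show ?thesis by (simp add: divided_diff_singleton step_def scale_def)
  next
    case 2
    then have "\<forall>x\<in>S. step x = 1" using fin by (auto simp: step_def dest: Max_ge)
    then show ?thesis using fin 2 divided_diff_const[of S step 1] scale_nonneg by simp
  next
    case 3
    then have "\<forall>x\<in>S. step x = 0" using fin by (auto simp: step_def dest: Min_le)
    then show ?thesis using fin 3 divided_diff_const[of S step 0] scale_nonneg by simp
  next
    case 4
    obtain m where m: "card S = 2 + m" using le_Suc_ex[OF 4(1)] by blast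
    define u v where "u = Min S" and "v = Max S"
    have uv: "u \<in> S" "v \<in> S" using fin less(3) by (simp_all add: u_def v_def)
    have "b \<le> v" using nothing_between[of v] 4 uv less(2) by (force simp: v_def)
    then have span_gap: "b - a \<le> v - u" using 4 by (simp add: u_def)
    have u_less_v: "u < v" using span_gap a_less_b by simp
    have span: "(if m < k then b - a else \<gamma>) \<le> v - u"
      using span_gap sparse_atoms_spread[OF finite_atoms sparse less(2)] m
      by (auto simp: u_def v_def)
    have card_rem: "card (S - {u}) = Suc m" "card (S - {v}) = Suc m"
      using uv fin m by auto
    have IH: "\<bar>divided_diff step (S - {w})\<bar> \<le> 2 ^ m * scale m"
      if "w \<in> {u, v}" for w
    proof -
      have "\<bar>divided_diff step (S - {w})\<bar>
          \<le> 2 ^ (card (S - {w}) - 1) * scale (card (S - {w}) - 1)"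
      proof (rule less(1))
        show "S - {w} \<noteq> {}" using that uv u_less_v by auto
      qed (use that card_rem less(2) m in auto)
      then show ?thesis using that card_rem by auto
    qed
    have "\<bar>divided_diff step S\<bar>
        = \<bar>divided_diff step (S - {u}) - divided_diff step (S - {v})\<bar> / (v - u)"
      using divided_diff_remove[OF fin uv] u_less_v by simp
    also have "\<dots> \<le> 2 * (2 ^ m * scale m) / (v - u)"
      using IH[of u] IH[of v] u_less_v by (intro divide_right_mono) auto
    also have "\<dots> \<le> 2 * (2 ^ m * scale m) / (if m < k then b - a else \<gamma>)"
      using span a_less_b gamma_pos scale_nonneg by (intro divide_left_mono) auto
    also have "\<dots> = 2 ^ (card S - 1) * scale (card S - 1)"
      using m by (simp add: scale_Suc)
    finally show ?thesis .
  qed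
qed

lemma abs_pairing_interp_step_le:
  assumes D: "sum D A = 0" "\<forall>i\<in>{1..card A - 1}. \<bar>\<Sum>x\<in>A. x ^ i * D x\<bar> \<le> \<delta>" "\<delta> \<ge> 0"
    and S: "S \<subseteq> A" "S \<noteq> {}"
  shows "\<bar>pairing D A (interp step S)\<bar> \<le> \<delta> * (\<Sum>n\<in>{2..card S}. 4 ^ (n - 1) * scale (n - 1))"
proof -
  have "finite S" using S finite_atoms finite_subset by blast
  then show ?thesis using S(2,1)
  proof (induction S rule: finite_ne_induct)
    case (singleton x)
    then show ?case using D by (simp add: interp_singleton pairing_def sum_distrib_left[symmetric])
  next
    case (insert x S)
    define c where "c = card S"
    have card_ins: "card (insert x S) = Suc c" using insert by (simp add: c_def)
    have "card (insert x S) \<le> card A" using insert finite_atoms by (intro card_mono) auto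
    then have "degree (node_poly S) \<le> card A - 1"
      using degree_node_poly[OF insert(1)] card_ins by (simp add: c_def)
    then have "\<bar>pairing D A (node_poly S)\<bar> \<le> \<delta> * coeff_l1 (node_poly S)"
      by (rule abs_pairing_le[OF D])
    also have "\<dots> \<le> \<delta> * 2 ^ c"
      using coeff_l1_node_poly[OF insert(1)] insert(5) atoms_bounded D(3)
      by (intro mult_left_mono) (auto simp: c_def)
    finally have node: "\<bar>pairing D A (node_poly S)\<bar> \<le> \<delta> * 2 ^ c" .
    have dd: "\<bar>divided_diff step (insert x S)\<bar> \<le> 2 ^ c * scale c"
      using divided_diff_step_bound[of "insert x S"] insert card_ins by simp
    have "c \<ge> 1" using insert by (simp add: c_def Suc_le_eq card_gt_0_iff)
    then have "interp step (insert x S)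
        = interp step S + smult (divided_diff step (insert x S)) (node_poly S)"
      using interp_remove[of "insert x S" x step] insert card_ins by simp
    then have "\<bar>pairing D A (interp step (insert x S))\<bar>
        \<le> \<bar>pairing D A (interp step S)\<bar> + \<bar>divided_diff step (insert x S)\<bar> * \<bar>pairing D A (node_poly S)\<bar>"
      by (simp add: pairing_add pairing_smult abs_mult[symmetric] abs_triangle_ineq)
    also have "\<dots> \<le> \<delta> * (\<Sum>n\<in>{2..c}. 4 ^ (n - 1) * scale (n - 1)) + 2 ^ c * scale c * (\<delta> * 2 ^ c)"
      using insert dd node scale_nonneg by (intro add_mono mult_mono) (auto simp: c_def)
    also have "\<dots> = \<delta> * (\<Sum>n\<in>{2..card (insert x S)}. 4 ^ (n - 1) * scale (n - 1))"
      using \<open>c \<ge> 1\<close> by (simp add: card_ins algebra_simps power_mult_distrib[symmetric])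
    finally show ?case .
  qed
qed

lemma scale_mult_le:
  assumes "m \<le> card A - 1"
  shows "(b - a) ^ k * \<gamma> ^ (card A - 1 - k) * scale m \<le> 2 ^ (card A - 1 - m)"
proof -
  define L where "L = card A - 1"
  have L_bounds: "m \<le> L" "k \<le> L" using assms k_le by (simp_all add: L_def)
  have "(b - a) ^ k * \<gamma> ^ (L - k) * scale m = (b - a) ^ (k - min m k) * \<gamma> ^ ((L - k) - (m - k))"
  proof -
    have "(b - a) ^ k = (b - a) ^ min m k * (b - a) ^ (k - min m k)"
      by (simp add: power_add[symmetric])
    moreover have "(m - k) + ((L - k) - (m - k)) = L - k"
      using L_bounds by simp
    then have "\<gamma> ^ (L - k) = \<gamma> ^ (m - k) * \<gamma> ^ ((L - k) - (m - k))"
      by (metis power_add)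
    ultimately show ?thesis using a_less_b gamma_pos by (simp add: scale_def field_simps)
  qed
  also have "\<dots> \<le> 2 ^ (k - min m k) * 2 ^ ((L - k) - (m - k))"
  proof (rule mult_mono)
    show "(b - a) ^ (k - min m k) \<le> 2 ^ (k - min m k)"
      using a_less_b gap_le_2 by (intro power_mono) auto
    show "\<gamma> ^ (L - k - (m - k)) \<le> 2 ^ (L - k - (m - k))"
    proof (cases "k < L")
      case True
      then have "\<gamma> \<le> 2"
        using sparse_atoms_gamma_le_2[OF finite_atoms atoms_bounded sparse] by (simp add: L_def)
      then show ?thesis using gamma_pos by (intro power_mono) auto
    qed (use L_bounds in simp)
  qed (use a_less_b gamma_pos in auto)
  also have "\<dots> = 2 ^ (L - m)"
  proof -
    have "(k - min m k) + ((L - k) - (m - k)) = L - m"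
      using L_bounds by (simp add: min_def)
    then show ?thesis by (metis power_add)
  qed
  finally show ?thesis by (simp add: L_def)
qed

lemma abs_sum_below_cut_le:
  assumes D: "sum D A = 0" "\<forall>i\<in>{1..card A - 1}. \<bar>\<Sum>x\<in>A. x ^ i * D x\<bar> \<le> \<delta>"
  shows "\<bar>\<Sum>x\<in>{y\<in>A. y \<le> a}. D x\<bar> * (b - a) ^ k
    \<le> \<delta> * real (card A - 1) * 4 ^ (card A - 1) / \<gamma> ^ (card A - 1 - k)"
proof -
  define L where "L = card A - 1"
  define K where "K = (b - a) ^ k * \<gamma> ^ (L - k)"
  have K_pos: "K > 0" using a_less_b gamma_pos by (simp add: K_def)
  have "card {a, b} \<le> card A" using a_in b_in finite_atoms by (intro card_mono) auto
  then have "L \<ge> 1" using a_less_b by (simp add: L_def)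
  then have \<delta>_nonneg: "\<delta> \<ge> 0" using D(2) by (force simp: L_def)
  have "A \<noteq> {}" using a_in by auto
  have "(\<Sum>x\<in>{y\<in>A. y \<le> a}. D x) = (\<Sum>x\<in>A. step x * D x)"
    using finite_atoms by (subst sum.inter_filter) (auto simp: step_def intro!: sum.cong)
  also have "\<dots> = pairing D A (interp step A)"
    using poly_interp[OF finite_atoms \<open>A \<noteq> {}\<close>] by (simp add: pairing_def)
  finally have "\<bar>\<Sum>x\<in>{y\<in>A. y \<le> a}. D x\<bar> \<le> \<delta> * (\<Sum>n\<in>{2..card A}. 4 ^ (n - 1) * scale (n - 1))"
    using abs_pairing_interp_step_le[OF D \<delta>_nonneg order.refl \<open>A \<noteq> {}\<close>] by simp
  also have "\<dots> \<le> \<delta> * (\<Sum>n\<in>{2..card A}. 4 ^ L / K)"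
  proof (intro mult_left_mono sum_mono)
    fix n assume n: "n \<in> {2..card A}"
    then have "K * scale (n - 1) \<le> 2 ^ (L - (n - 1))"
      using scale_mult_le[of "n - 1"] by (auto simp: K_def L_def)
    then have "4 ^ (n - 1) * scale (n - 1) \<le> 4 ^ (n - 1) * (2 ^ (L - (n - 1)) / K)"
      using K_pos by (intro mult_left_mono) (simp_all add: field_simps)
    also have "\<dots> \<le> 4 ^ (n - 1) * (4 ^ (L - (n - 1)) / K)"
      using K_pos by (intro mult_left_mono divide_right_mono power_mono) auto
    also have "\<dots> = 4 ^ L / K"
      using n by (simp add: L_def power_add[symmetric])
    finally show "4 ^ (n - 1) * scale (n - 1) \<le> 4 ^ L / K" .
  qed (use \<delta>_nonneg in auto)
  also have "\<dots> = \<delta> * real L * 4 ^ L / K"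
    by (simp add: L_def)
  finally have "\<bar>\<Sum>x\<in>{y\<in>A. y \<le> a}. D x\<bar> * K \<le> \<delta> * real L * 4 ^ L"
    using K_pos by (simp add: pos_le_divide_eq)
  then show ?thesis
    using gamma_pos by (simp add: K_def L_def pos_le_divide_eq ac_simps)
qed

end

section \<open>Transport on the line\<close>

definition coupling :: "'a set \<Rightarrow> ('a \<Rightarrow> real) \<Rightarrow> ('a \<Rightarrow> real) \<Rightarrow> ('a \<times> 'a \<Rightarrow> real) \<Rightarrow> bool" where
  "coupling A p q w \<longleftrightarrow> (\<forall>z. 0 \<le> w z) \<and> (\<forall>x y. w (x, y) \<noteq> 0 \<longrightarrow> x \<in> A \<and> y \<in> A) \<and>
     (\<forall>x\<in>A. (\<Sum>y\<in>A. w (x, y)) = p x) \<and> (\<forall>y\<in>A. (\<Sum>x\<in>A. w (x, y)) = q y)"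

definition transport_cost :: "'a::metric_space set \<Rightarrow> ('a \<times> 'a \<Rightarrow> real) \<Rightarrow> real" where
  "transport_cost A w = (\<Sum>x\<in>A. \<Sum>y\<in>A. w (x, y) * dist x y)"

lemma coupling_swap: "coupling A q p w \<Longrightarrow> coupling A p q (\<lambda>(x, y). w (y, x))"
  unfolding coupling_def by auto

lemma transport_cost_swap: "transport_cost A (\<lambda>(x, y). w (y, x)) = transport_cost A w"
  unfolding transport_cost_def by (subst sum.swap) (simp add: dist_commute)

definition split_row :: "'a \<Rightarrow> 'a \<Rightarrow> real \<Rightarrow> real \<Rightarrow> ('a \<times> 'a \<Rightarrow> real) \<Rightarrow> 'a \<times> 'a \<Rightarrow> real" where
  "split_row a a' \<theta> c w = (\<lambda>(x, y).
     if x = a then \<theta> * w (a', y) + (if y = a then c else 0)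
     else if x = a' then (1 - \<theta>) * w (a', y) else w (x, y))"

lemma coupling_split_row:
  assumes fin: "finite A'" and a: "a \<notin> A'" and a': "a' \<in> A'" and w: "coupling A' p' q w"
    and \<theta>: "0 \<le> \<theta>" "\<theta> \<le> 1" and "0 \<le> q a"
    and p: "p a = q a + \<theta> * p' a'" "p a' = (1 - \<theta>) * p' a'" "\<forall>x\<in>A' - {a'}. p x = p' x"
  shows "coupling (insert a A') p q (split_row a a' \<theta> (q a) w)"
proof -
  have w_nonneg: "\<And>z. 0 \<le> w z"
    and w_out: "\<And>x y. x \<notin> A' \<or> y \<notin> A' \<Longrightarrow> w (x, y) = 0"
    and rows: "\<And>x. x \<in> A' \<Longrightarrow> (\<Sum>y\<in>A'. w (x, y)) = p' x"
    and cols: "\<And>y. y \<in> A' \<Longrightarrow> (\<Sum>x\<in>A'. w (x, y)) = q y"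
    using w unfolding coupling_def by blast+
  define w2 where "w2 = split_row a a' \<theta> (q a) w"
  have a_ne: "a' \<noteq> a" using a a' by auto
  have w2_other: "w2 (x, y) = w (x, y)" if "x \<in> A' - {a'}" for x y
    using that a by (auto simp: w2_def split_row_def)
  have row_sum: "(\<Sum>y\<in>insert a A'. g y) = (\<Sum>y\<in>A'. g y)" if "g a = 0" for g :: "'a \<Rightarrow> real"
    using fin a that by simp
  have "(\<Sum>y\<in>insert a A'. w2 (x, y)) = p x" if "x \<in> insert a A'" for x
  proof -
    from that consider "x = a" | "x = a'" | "x \<in> A' - {a'}" by blast
    then show ?thesis
    proof cases
      case 1
      then show ?thesis
        using fin a w_out[of a' a] rows[OF a'] p(1)
        by (simp add: w2_def split_row_def sum.distrib sum_distrib_left[symmetric])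
    next
      case 2
      then show ?thesis
        using a_ne fin a w_out[of a' a] rows[OF a'] p(2)
        by (simp add: w2_def split_row_def sum_distrib_left[symmetric])
    next
      case 3
      then show ?thesis
        using a w_out[of x a] rows p(3) by (simp add: row_sum w2_other)
    qed
  qed
  moreover have "(\<Sum>x\<in>insert a A'. w2 (x, y)) = q y" if "y \<in> insert a A'" for y
  proof -
    have "(\<Sum>x\<in>A' - {a'}. w2 (x, y)) = (\<Sum>x\<in>A' - {a'}. w (x, y))"
      by (rule sum.cong) (simp_all add: w2_other)
    then have "(\<Sum>x\<in>insert a A'. w2 (x, y)) = (\<Sum>x\<in>A'. w (x, y)) + (if y = a then q a else 0)"
      using fin a a' a_ne by (simp add: sum.remove w2_def split_row_def algebra_simps)
    then show ?thesis using that cols w_out a by (auto simp: sum.neutral)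
  qed
  moreover have "0 \<le> w2 z" for z
    using \<theta> w_nonneg \<open>0 \<le> q a\<close> by (auto simp: w2_def split_row_def split: prod.split)
  moreover have "x \<in> insert a A' \<and> y \<in> insert a A'" if "w2 (x, y) \<noteq> 0" for x y
    using that a' w_out by (auto simp: w2_def split_row_def split: if_splits)
  ultimately show ?thesis by (simp add: coupling_def w2_def)
qed

text \<open>Row \<open>a\<close> of the split coupling sends its mass where row \<open>a'\<close> of \<open>w\<close> did, so by the
  triangle inequality it pays at most the extra distance \<open>dist a a'\<close> per unit.\<close>
lemma transport_cost_split_row:
  fixes A' :: "'a::metric_space set"
  assumes fin: "finite A'" and a: "a \<notin> A'" and a': "a' \<in> A'" and w: "coupling A' p' q w"
    and "0 \<le> \<theta>"
  shows "transport_cost (insert a A') (split_row a a' \<theta> c w)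
    \<le> transport_cost A' w + \<theta> * p' a' * dist a a'"
proof -
  have w_nonneg: "\<And>z. 0 \<le> w z"
    and w_out: "\<And>x y. x \<notin> A' \<or> y \<notin> A' \<Longrightarrow> w (x, y) = 0"
    and row_a': "(\<Sum>y\<in>A'. w (a', y)) = p' a'"
    using w a' unfolding coupling_def by blast+
  define w2 where "w2 = split_row a a' \<theta> c w"
  define R where "R x = (\<Sum>y\<in>A'. w (x, y) * dist x y)" for x
  define R2 where "R2 x = (\<Sum>y\<in>insert a A'. w2 (x, y) * dist x y)" for x
  have "R2 a = \<theta> * (\<Sum>y\<in>A'. w (a', y) * dist a y)"
    using fin a by (simp add: R2_def w2_def split_row_def sum_distrib_left mult.assoc)
      (intro sum.cong, auto)
  also have "\<dots> \<le> \<theta> * (\<Sum>y\<in>A'. w (a', y) * (dist a' y + dist a a'))"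
  proof (rule mult_left_mono, rule sum_mono)
    fix y
    have "dist a y \<le> dist a' y + dist a a'"
      using dist_triangle[of a y a'] by linarith
    then show "w (a', y) * dist a y \<le> w (a', y) * (dist a' y + dist a a')"
      using w_nonneg by (intro mult_left_mono) auto
  qed (use \<open>0 \<le> \<theta>\<close> in simp)
  also have "\<dots> = \<theta> * R a' + \<theta> * p' a' * dist a a'"
    using row_a' by (simp add: R_def distrib_left sum.distrib sum_distrib_right[symmetric])
  finally have "R2 a \<le> \<theta> * R a' + \<theta> * p' a' * dist a a'" .
  moreover have "R2 a' = (1 - \<theta>) * R a'"
    using fin a a' w_out[of a' a] by (auto simp: R2_def R_def w2_def split_row_def sum_distrib_left mult.assoc)
  moreover have "R2 x = R x" if "x \<in> A' - {a'}" for x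
    using fin that a w_out[of x a] by (auto simp: R2_def R_def w2_def split_row_def)
  then have "(\<Sum>x\<in>A' - {a'}. R2 x) = (\<Sum>x\<in>A' - {a'}. R x)" by simp
  ultimately have "(\<Sum>x\<in>insert a A'. R2 x) \<le> (\<Sum>x\<in>A'. R x) + \<theta> * p' a' * dist a a'"
    using fin a a' by (simp add: sum.remove algebra_simps)
  then show ?thesis by (simp add: transport_cost_def R_def R2_def w2_def)
qed

definition adjacent_pairs :: "real set \<Rightarrow> (real \<times> real) set" where
  "adjacent_pairs A = {(a, b). adjacent A a b}"

definition cdf :: "real set \<Rightarrow> (real \<Rightarrow> real) \<Rightarrow> real \<Rightarrow> real" where
  "cdf A p u = (\<Sum>x\<in>{y\<in>A. y \<le> u}. p x)"

text \<open>The integral of \<open>|F\<^sub>p - F\<^sub>q|\<close> for the step functions \<open>F\<^sub>p, F\<^sub>q\<close> with jumps in \<open>A\<close>.\<close>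
definition cdf_l1_dist :: "real set \<Rightarrow> (real \<Rightarrow> real) \<Rightarrow> (real \<Rightarrow> real) \<Rightarrow> real" where
  "cdf_l1_dist A p q = (\<Sum>(u, v)\<in>adjacent_pairs A. \<bar>cdf A p u - cdf A q u\<bar> * (v - u))"

lemma cdf_l1_dist_commute: "cdf_l1_dist A q p = cdf_l1_dist A p q"
  by (simp add: cdf_l1_dist_def abs_minus_commute)

lemma finite_adjacent_pairs: "finite A \<Longrightarrow> finite (adjacent_pairs A)"
  by (rule finite_subset[of _ "A \<times> A"]) (auto simp: adjacent_pairs_def adjacent_def)

lemma adjacent_pairs_singleton: "adjacent_pairs {a} = {}"
  by (auto simp: adjacent_pairs_def adjacent_def)

lemma adjacent_pairs_insert_Min:
  assumes "finite A" "A \<noteq> {}" "\<forall>x\<in>A. a < x"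
  shows "adjacent_pairs (insert a A) = insert (a, Min A) (adjacent_pairs A)"
proof -
  have Min: "Min A \<in> A" "\<And>x. x \<in> A \<Longrightarrow> Min A \<le> x" using assms by auto
  have "adjacent (insert a A) u v \<longleftrightarrow> (u = a \<and> v = Min A) \<or> adjacent A u v" for u v
    using assms(3) Min unfolding adjacent_def by (smt (verit) insert_iff)
  then show ?thesis by (auto simp: adjacent_pairs_def)
qed

lemma card_adjacent_pairs_le: "finite A \<Longrightarrow> card (adjacent_pairs A) \<le> card A - 1"
proof (induction A rule: finite_linorder_min_induct)
  case (insert a A)
  show ?case
  proof (cases "A = {}")
    case True
    then show ?thesis by (simp add: adjacent_pairs_singleton)
  next
    case False
    then have "card (adjacent_pairs (insert a A)) \<le> Suc (card (adjacent_pairs A))"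
      using insert by (simp add: adjacent_pairs_insert_Min card_insert_le_m1 finite_adjacent_pairs
          card_insert_if)
    moreover have "a \<notin> A" "card A \<ge> 1"
      using insert False by (auto simp: Suc_le_eq card_gt_0_iff)
    ultimately show ?thesis using insert by simp
  qed
qed (simp add: adjacent_pairs_def adjacent_def)

lemma cdf_insert_below:
  "finite A \<Longrightarrow> \<forall>x\<in>A. a < x \<Longrightarrow> u \<in> A \<Longrightarrow> cdf (insert a A) p u = p a + cdf A p u"
proof -
  assume "finite A" "\<forall>x\<in>A. a < x" "u \<in> A"
  then have "{y \<in> insert a A. y \<le> u} = insert a {y\<in>A. y \<le> u}" "a \<notin> A" by force+
  then show ?thesis using \<open>finite A\<close> by (simp add: cdf_def)
qed

text \<open>Moving the jump of \<open>p - q\<close> at the leftmost atom onto its right neighbour leaves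
  \<open>F\<^sub>p - F\<^sub>q\<close> unchanged beyond that neighbour.\<close>
lemma cdf_l1_dist_insert_below:
  assumes fin: "finite A" and ne: "A \<noteq> {}" and below: "\<forall>x\<in>A. a < x"
  shows "cdf_l1_dist (insert a A) p q
    = \<bar>p a - q a\<bar> * (Min A - a) + cdf_l1_dist A (\<lambda>x. p x + (if x = Min A then p a - q a else 0)) q"
proof -
  define p' where "p' = (\<lambda>x. p x + (if x = Min A then p a - q a else 0))"
  have a: "a \<notin> A" using below by auto
  have "{y\<in>insert a A. y \<le> a} = {a}" using below by force
  then have jump: "cdf (insert a A) p a - cdf (insert a A) q a = p a - q a"
    by (simp add: cdf_def)
  have shift: "cdf (insert a A) p u - cdf (insert a A) q u = cdf A p' u - cdf A q u" if "u \<in> A" for u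
  proof -
    have "Min A \<in> {y\<in>A. y \<le> u}" using fin ne that by auto
    then have "cdf A p' u = cdf A p u + (p a - q a)"
      using fin by (simp add: cdf_def p'_def sum.distrib)
    then show ?thesis using cdf_insert_below[OF fin below that] by simp
  qed
  have "(a, Min A) \<notin> adjacent_pairs A"
    using a by (auto simp: adjacent_pairs_def adjacent_def)
  then have "cdf_l1_dist (insert a A) p q = \<bar>p a - q a\<bar> * (Min A - a)
      + (\<Sum>(u, v)\<in>adjacent_pairs A. \<bar>cdf (insert a A) p u - cdf (insert a A) q u\<bar> * (v - u))"
    using fin ne below jump
    by (simp add: cdf_l1_dist_def adjacent_pairs_insert_Min finite_adjacent_pairs)
  also have "\<dots> = \<bar>p a - q a\<bar> * (Min A - a) + cdf_l1_dist A p' q"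
    unfolding cdf_l1_dist_def
    by (intro arg_cong2[where f="(+)"] sum.cong) (auto simp: shift adjacent_pairs_def adjacent_def)
  finally show ?thesis by (simp add: p'_def)
qed

lemma exists_coupling_cost_le_cdf_l1_dist:
  fixes A :: "real set"
  assumes "finite A" "\<forall>x\<in>A. 0 \<le> p x" "\<forall>x\<in>A. 0 \<le> q x" "sum p A = sum q A"
  shows "\<exists>w. coupling A p q w \<and> transport_cost A w \<le> cdf_l1_dist A p q"
  using assms
proof (induction A arbitrary: p q rule: finite_linorder_min_induct)
  case empty
  show ?case
    by (intro exI[of _ "\<lambda>_. 0"])
      (simp add: coupling_def transport_cost_def cdf_l1_dist_def adjacent_pairs_def adjacent_def)
next
  case (insert a A')
  have a: "a \<notin> A'" using insert by auto
  show ?case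
  proof (cases "A' = {}")
    case True
    then have "p a = q a" using insert by simp
    then have "coupling {a} p q (\<lambda>z. if z = (a, a) then p a else 0)"
      using insert by (auto simp: coupling_def)
    then show ?thesis
      using True by (auto simp: transport_cost_def cdf_l1_dist_def adjacent_pairs_singleton)
  next
    case False
    define a' where "a' = Min A'"
    have a': "a' \<in> A'" "a < a'" using insert False by (auto simp: a'_def)
    have one_sided: "\<exists>w. coupling (insert a A') p q w
        \<and> transport_cost (insert a A') w \<le> cdf_l1_dist (insert a A') p q"
      if qp: "q a \<le> p a" and nonneg: "\<forall>x\<in>insert a A'. 0 \<le> p x" "\<forall>x\<in>insert a A'. 0 \<le> q x"
        and sums: "sum p (insert a A') = sum q (insert a A')" for p q
    proof -
      define p' where "p' = (\<lambda>x. p x + (if x = a' then p a - q a else 0))"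
      have "sum p' A' = sum q A'"
        using sums insert(1) a a' by (simp add: p'_def sum.distrib)
      moreover have "\<forall>x\<in>A'. 0 \<le> p' x" using nonneg qp by (auto simp: p'_def)
      ultimately obtain w where w: "coupling A' p' q w" "transport_cost A' w \<le> cdf_l1_dist A' p' q"
        using insert.IH[of p' q] nonneg by auto
      define \<theta> where "\<theta> = (p a - q a) / p' a'"
      have "0 \<le> p a - q a" "p a - q a \<le> p' a'" using qp nonneg a' by (auto simp: p'_def)
      then have \<theta>: "0 \<le> \<theta>" "\<theta> \<le> 1" "\<theta> * p' a' = p a - q a" by (auto simp: \<theta>_def divide_le_eq_1)
      have coupling: "coupling (insert a A') p q (split_row a a' \<theta> (q a) w)"
        using \<theta> nonneg a' by (intro coupling_split_row[OF insert(1) a a'(1) w(1)])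
          (auto simp: p'_def algebra_simps)
      have "transport_cost (insert a A') (split_row a a' \<theta> (q a) w)
          \<le> transport_cost A' w + (p a - q a) * (a' - a)"
        using transport_cost_split_row[OF insert(1) a a'(1) w(1) \<theta>(1), of "q a"] \<theta>(3) a'
        by (simp add: dist_real_def)
      also have "\<dots> \<le> cdf_l1_dist A' p' q + (p a - q a) * (a' - a)"
        using w(2) by simp
      also have "\<dots> = cdf_l1_dist (insert a A') p q"
        using cdf_l1_dist_insert_below[OF insert(1) False insert(2), of p q] qp
        by (simp add: a'_def p'_def)
      finally show ?thesis using coupling by blast
    qed
    show ?thesis
    proof (cases "q a \<le> p a")
      case True
      then show ?thesis using one_sided insert.prems by blast
    next
      case False
      then obtain w where "coupling (insert a A') q p w"
        "transport_cost (insert a A') w \<le> cdf_l1_dist (insert a A') q p"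
        using one_sided[where p=q and q=p] insert.prems by auto
      then show ?thesis
        by (intro exI[of _ "\<lambda>(x, y). w (y, x)"])
          (simp add: coupling_swap transport_cost_swap cdf_l1_dist_commute)
    qed
  qed
qed

lemma pmf_map_finite_support:
  assumes "finite B" "set_pmf \<pi> \<subseteq> B"
  shows "pmf (map_pmf f \<pi>) x = (\<Sum>z\<in>{z\<in>B. f z = x}. pmf \<pi> z)"
proof -
  have "pmf (map_pmf f \<pi>) x = measure \<pi> (f -` {x} \<inter> set_pmf \<pi>)"
    by (simp add: pmf_map measure_Int_set_pmf)
  also have "f -` {x} \<inter> set_pmf \<pi> = {z\<in>B. f z = x} \<inter> set_pmf \<pi>"
    using assms by auto
  also have "measure \<pi> \<dots> = (\<Sum>z\<in>{z\<in>B. f z = x}. pmf \<pi> z)"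
    using assms by (simp add: measure_Int_set_pmf measure_measure_pmf_finite)
  finally show ?thesis .
qed

lemma
  assumes "finite A" "set_pmf \<pi> \<subseteq> A \<times> A"
  shows pmf_map_fst_finite: "pmf (map_pmf fst \<pi>) x = (\<Sum>y\<in>A. pmf \<pi> (x, y))"
    and pmf_map_snd_finite: "pmf (map_pmf snd \<pi>) y = (\<Sum>x\<in>A. pmf \<pi> (x, y))"
proof -
  have out: "pmf \<pi> z = 0" if "z \<notin> A \<times> A" for z
    using assms that by (auto simp: set_pmf_eq)
  show "pmf (map_pmf fst \<pi>) x = (\<Sum>y\<in>A. pmf \<pi> (x, y))"
  proof (cases "x \<in> A")
    case True
    then have "{z \<in> A \<times> A. fst z = x} = Pair x ` A" by auto
    then show ?thesis
      using assms by (simp add: pmf_map_finite_support[of "A \<times> A"] sum.reindex inj_on_def)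
  next
    case False
    then have "pmf (map_pmf fst \<pi>) x = 0" using assms by (auto intro!: pmf_map_outside)
    then show ?thesis using out False by simp
  qed
  show "pmf (map_pmf snd \<pi>) y = (\<Sum>x\<in>A. pmf \<pi> (x, y))"
  proof (cases "y \<in> A")
    case True
    then have "{z \<in> A \<times> A. snd z = y} = (\<lambda>x. (x, y)) ` A" by auto
    then show ?thesis
      using assms by (simp add: pmf_map_finite_support[of "A \<times> A"] sum.reindex inj_on_def)
  next
    case False
    then have "pmf (map_pmf snd \<pi>) y = 0" using assms by (auto intro!: pmf_map_outside)
    then show ?thesis using out False by simp
  qed
qed

lemma W1_le_transport_cost:
  fixes \<mu> \<nu> :: "real pmf"
  assumes A: "finite A" "set_pmf \<mu> \<subseteq> A" "set_pmf \<nu> \<subseteq> A"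
    and w: "coupling A (pmf \<mu>) (pmf \<nu>) w"
  shows "W1 \<mu> \<nu> \<le> transport_cost A w"
proof -
  have w_out: "w z = 0" if "z \<notin> A \<times> A" for z
    using w that unfolding coupling_def by (cases z) auto
  have w_nonneg: "\<And>z. 0 \<le> w z"
    and rows: "\<And>x. x \<in> A \<Longrightarrow> (\<Sum>y\<in>A. w (x, y)) = pmf \<mu> x"
    and cols: "\<And>y. y \<in> A \<Longrightarrow> (\<Sum>x\<in>A. w (x, y)) = pmf \<nu> y"
    using w unfolding coupling_def by auto
  have "(\<Sum>z\<in>A \<times> A. w z) = (\<Sum>x\<in>A. \<Sum>y\<in>A. w (x, y))"
    by (simp add: sum.cartesian_product)
  also have "\<dots> = 1"
    using rows sum_pmf_eq_1[OF A(1,2)] by simp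
  finally have "(\<Sum>z\<in>A \<times> A. w z) = 1" .
  then have total: "(\<integral>\<^sup>+z. ennreal (w z) \<partial>count_space UNIV) = 1"
    using A w_out w_nonneg by (subst nn_integral_count_space'[of "A \<times> A"]) auto
  define \<pi> where "\<pi> = embed_pmf w"
  have pmf_\<pi>: "pmf \<pi> = w"
    unfolding \<pi>_def using pmf_embed_pmf[OF _ total] w_nonneg by auto
  have set_\<pi>: "set_pmf \<pi> \<subseteq> A \<times> A"
    using w_out by (auto simp: set_pmf_eq pmf_\<pi>)
  have outside: "pmf \<mu> x = 0" "pmf \<nu> x = 0" if "x \<notin> A" for x
    using A that by (auto simp: pmf_eq_0_set_pmf)
  have "map_pmf fst \<pi> = \<mu>"
  proof (rule pmf_eqI)
    fix x show "pmf (map_pmf fst \<pi>) x = pmf \<mu> x"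
      using rows w_out outside by (cases "x \<in> A") (auto simp: pmf_map_fst_finite[OF A(1) set_\<pi>] pmf_\<pi>)
  qed
  moreover have "map_pmf snd \<pi> = \<nu>"
  proof (rule pmf_eqI)
    fix y show "pmf (map_pmf snd \<pi>) y = pmf \<nu> y"
      using cols w_out outside by (cases "y \<in> A") (auto simp: pmf_map_snd_finite[OF A(1) set_\<pi>] pmf_\<pi>)
  qed
  ultimately have "W1 \<mu> \<nu> \<le> measure_pmf.expectation \<pi> (\<lambda>(x, y). \<bar>x - y\<bar>)"
    unfolding W1_def
    by (intro cInf_lower bdd_belowI[of _ 0]) (auto intro!: integral_nonneg simp: split_beta)
  also have "\<dots> = transport_cost A w"
    using A set_\<pi>
    by (subst integral_measure_pmf_real[of "A \<times> A"])
      (auto simp: transport_cost_def sum.cartesian_product pmf_\<pi> dist_real_def split_beta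
        intro!: sum.cong)
  finally show ?thesis .
qed

lemma W1_le_cdf_l1_dist:
  fixes \<mu> \<nu> :: "real pmf"
  assumes "finite A" "set_pmf \<mu> \<subseteq> A" "set_pmf \<nu> \<subseteq> A"
  shows "W1 \<mu> \<nu> \<le> cdf_l1_dist A (pmf \<mu>) (pmf \<nu>)"
proof -
  have "sum (pmf \<mu>) A = sum (pmf \<nu>) A"
    using assms by (simp add: sum_pmf_eq_1)
  then obtain w where "coupling A (pmf \<mu>) (pmf \<nu>) w"
    "transport_cost A w \<le> cdf_l1_dist A (pmf \<mu>) (pmf \<nu>)"
    using exists_coupling_cost_le_cdf_l1_dist[OF assms(1), of "pmf \<mu>" "pmf \<nu>"] by auto
  then show ?thesis using W1_le_transport_cost[OF assms] by fastforce
qed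

lemma moment_finite_support:
  "finite A \<Longrightarrow> set_pmf \<mu> \<subseteq> A \<Longrightarrow> moment \<mu> i = (\<Sum>x\<in>A. x ^ i * pmf \<mu> x)"
  unfolding moment_def by (subst integral_measure_pmf_real[of A]) (auto simp: mult.commute)

lemma cdf_pmf_bounds:
  assumes "finite A" "set_pmf \<mu> \<subseteq> A"
  shows "0 \<le> cdf A (pmf \<mu>) u" "cdf A (pmf \<mu>) u \<le> 1"
proof -
  show "0 \<le> cdf A (pmf \<mu>) u" by (simp add: cdf_def sum_nonneg)
  have "cdf A (pmf \<mu>) u \<le> sum (pmf \<mu>) A"
    unfolding cdf_def using assms(1) by (intro sum_mono2) auto
  then show "cdf A (pmf \<mu>) u \<le> 1" using sum_pmf_eq_1[OF assms] by simp
qed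

lemma cdf_gap_bound:
  fixes \<mu> \<nu> :: "real pmf"
  assumes "finite A" "A \<subseteq> {-1..1}" "set_pmf \<mu> \<subseteq> A" "set_pmf \<nu> \<subseteq> A"
    and "\<gamma> > 0" "sparse_atoms A \<gamma> k" "k \<le> card A - 1" "adjacent A u v"
    and moments: "\<forall>i\<in>{1..card A - 1}. \<bar>moment \<mu> i - moment \<nu> i\<bar> \<le> \<delta>"
  shows "\<bar>cdf A (pmf \<mu>) u - cdf A (pmf \<nu>) u\<bar> * (v - u) ^ k
    \<le> \<delta> * real (card A - 1) * 4 ^ (card A - 1) / \<gamma> ^ (card A - 1 - k)"
proof -
  interpret adjacent_atoms A u v \<gamma> k
    using assms by unfold_locales
  define D where "D x = pmf \<mu> x - pmf \<nu> x" for x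
  have "sum D A = 0"
    using sum_pmf_eq_1[OF assms(1,3)] sum_pmf_eq_1[OF assms(1,4)] by (simp add: D_def sum_subtractf)
  moreover have "(\<Sum>x\<in>A. x ^ i * D x) = moment \<mu> i - moment \<nu> i" for i
    using assms by (simp add: moment_finite_support D_def algebra_simps sum_subtractf)
  ultimately have "\<bar>\<Sum>x\<in>{y\<in>A. y \<le> u}. D x\<bar> * (v - u) ^ k
      \<le> \<delta> * real (card A - 1) * 4 ^ (card A - 1) / \<gamma> ^ (card A - 1 - k)"
    using moments by (intro abs_sum_below_cut_le) auto
  then show ?thesis by (simp add: cdf_def D_def sum_subtractf)
qed

lemma mult_le_root_of_mult_power_le:
  fixes d g X :: real
  assumes "0 \<le> d" "d \<le> 1" "0 \<le> g" "d * g ^ k \<le> X" "k \<ge> 1"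
  shows "d * g \<le> X powr (1 / real k)"
proof -
  obtain m where k: "k = Suc m" using assms(5) by (cases k) auto
  have "0 \<le> d * g ^ k" using assms(1,3) by simp
  then have "X \<ge> 0" using assms(4) by linarith
  have "(X powr (1 / real k)) ^ k = (X powr (1 / real k)) powr real k"
    by (rule powr_realpow'[symmetric]) (simp_all add: k)
  also have "\<dots> = X powr (1 / real k * real k)"
    by (rule powr_powr)
  also have "\<dots> = X" using \<open>X \<ge> 0\<close> by (simp add: k)
  finally have root: "(X powr (1 / real k)) ^ k = X" .
  have "d ^ k \<le> d ^ 1"
    using assms(1,2,5) by (rule power_decreasing[rotated 1])
  then have "(d * g) ^ k \<le> d * g ^ k"
    using assms(3) by (simp add: power_mult_distrib mult_right_mono)
  also have "\<dots> \<le> (X powr (1 / real k)) ^ k" using assms(4) root by simp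
  finally show ?thesis
    using power_le_imp_le_base[of "d * g" m "X powr (1 / real k)"] by (simp add: k)
qed

lemma cdf_gap_mult_gap_le:
  fixes \<mu> \<nu> :: "real pmf"
  assumes "finite A" "card A = l" "A \<subseteq> {-1..1}" "set_pmf \<mu> \<subseteq> A" "set_pmf \<nu> \<subseteq> A"
    and "\<gamma> > 0" "sparse_atoms A \<gamma> k" "1 \<le> k" "k \<le> l - 1" "adjacent A u v"
    and moments: "\<forall>i\<in>{1..l - 1}. \<bar>moment \<mu> i - moment \<nu> i\<bar> \<le> \<delta>"
  shows "\<bar>cdf A (pmf \<mu>) u - cdf A (pmf \<nu>) u\<bar> * (v - u)
    \<le> (real l * 4 ^ (l - 1) * \<delta> / \<gamma> powr (real l - real k - 1)) powr (1 / real k)"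
proof (rule mult_le_root_of_mult_power_le)
  have "\<bar>moment \<mu> 1 - moment \<nu> 1\<bar> \<le> \<delta>" using moments assms(8,9) by simp
  then have "\<delta> \<ge> 0" by linarith
  have "real l - real k - 1 = real (l - 1 - k)" using assms(8,9) by linarith
  then have "\<gamma> powr (real l - real k - 1) = \<gamma> ^ (l - 1 - k)"
    using assms(6) by (simp only: powr_realpow)
  moreover have "\<delta> * real (l - 1) * 4 ^ (l - 1) \<le> real l * 4 ^ (l - 1) * \<delta>"
  proof -
    have "real (l - 1) * (\<delta> * 4 ^ (l - 1)) \<le> real l * (\<delta> * 4 ^ (l - 1))"
      using \<open>\<delta> \<ge> 0\<close> by (intro mult_right_mono) auto
    then show ?thesis by (simp add: ac_simps)
  qed
  ultimately have "\<delta> * real (l - 1) * 4 ^ (l - 1) / \<gamma> ^ (l - 1 - k)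
      \<le> real l * 4 ^ (l - 1) * \<delta> / \<gamma> powr (real l - real k - 1)"
    using assms(6) by (simp add: divide_right_mono)
  then show "\<bar>cdf A (pmf \<mu>) u - cdf A (pmf \<nu>) u\<bar> * (v - u) ^ k
      \<le> real l * 4 ^ (l - 1) * \<delta> / \<gamma> powr (real l - real k - 1)"
    using cdf_gap_bound[OF assms(1,3-7) _ assms(10)] assms(2,9) moments by (auto intro: order.trans)
  show "\<bar>cdf A (pmf \<mu>) u - cdf A (pmf \<nu>) u\<bar> \<le> 1"
    using cdf_pmf_bounds[OF assms(1,4), of u] cdf_pmf_bounds[OF assms(1,5), of u]
    by (simp add: abs_le_iff)
  show "0 \<le> v - u" using assms(10) by (simp add: adjacent_def)
qed (use assms(8) in auto)

theorem proposition4: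
  fixes mu1 mu2 :: "real pmf" and A :: "real set" and l k :: nat and \<gamma> :: real
  assumes "finite A" and "card A = l" and "A \<subseteq> {-1..1}"
    and "set_pmf mu1 \<subseteq> A" and "set_pmf mu2 \<subseteq> A"
    and "\<gamma> > 0" and "1 \<le> k" and "k \<le> l - 1"
    and "\<forall>a\<in>A. card {b\<in>A. b \<noteq> a \<and> \<bar>a - b\<bar> < \<gamma>} \<le> k"
  shows "W1 mu1 mu2 \<le>
    real l * ((real l * 4 ^ (l - 1)
        * Max ((\<lambda>i. \<bar>moment mu1 i - moment mu2 i\<bar>) ` {1..l - 1}))
      / \<gamma> powr (real l - real k - 1)) powr (1 / real k)"
proof -
  define \<delta> where "\<delta> = Max ((\<lambda>i. \<bar>moment mu1 i - moment mu2 i\<bar>) ` {1..l - 1})"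
  define t where "t = (real l * 4 ^ (l - 1) * \<delta> / \<gamma> powr (real l - real k - 1)) powr (1 / real k)"
  have "\<forall>i\<in>{1..l - 1}. \<bar>moment mu1 i - moment mu2 i\<bar> \<le> \<delta>"
    by (auto simp: \<delta>_def intro: Max_ge)
  moreover have "sparse_atoms A \<gamma> k" using assms(9) by (simp add: sparse_atoms_def)
  ultimately have gap: "\<bar>cdf A (pmf mu1) u - cdf A (pmf mu2) u\<bar> * (v - u) \<le> t"
    if "(u, v) \<in> adjacent_pairs A" for u v
    using cdf_gap_mult_gap_le[OF assms(1-6) _ assms(7,8)] that
    by (simp add: t_def adjacent_pairs_def)
  have "W1 mu1 mu2 \<le> cdf_l1_dist A (pmf mu1) (pmf mu2)"
    using assms(1,4,5) by (rule W1_le_cdf_l1_dist)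
  also have "\<dots> \<le> real (card (adjacent_pairs A)) * t"
    unfolding cdf_l1_dist_def using gap by (intro sum_bounded_above) (auto split: prod.splits)
  also have "\<dots> \<le> real l * t"
    using card_adjacent_pairs_le[OF assms(1)] assms(2) by (intro mult_right_mono) (auto simp: t_def)
  finally show ?thesis unfolding t_def \<delta>_def .
qed

end
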